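(* In the Chung–Lu random graph model with expected degree sequence $(d_1,\dots,d_n)$, let $s\neq t$ be vertices and $r\ge 1$ an integer. Then $$E[SP_r(s,t)]\ \ge\ p_{st}\left(\frac{S_2}{S}\right)^{r-1}\left(1-\frac{r(r+1)\,p_{\max}}{2}\cdot\frac{S}{S_2}\right).$$
   Context: Chung–Lu model: given $d_1,\dots,d_n>0$ with $S=\sum_{i=1}^n d_i$ and $\max_i d_i^2\le S$, the random undirected graph on $\{1,\dots,n\}$ contains each edge $\{i,j\}$ (including loops $i=j$) independently with probability $p_{ij}=d_id_j/S$. Notation: $S_2=\sum_{i=1}^n d_i^2$, $d_{\max}=\max_i d_i$, $p_{\max}=d_{\max}^2/S$. $SP_r(s,t)$ is the number of simple paths of length $r$ from $s$ to $t$, i.e. sequences $(s=b_0,b_1,\dots,b_{r-1},b_r=t)$ of pairwise distinct vertices with each $\{b_i,b_{i+1}\}$ an edge of the graph. *)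

theory Defs
  imports "HOL-Probability.Probability"
begin

definition CL_S :: "nat \<Rightarrow> (nat \<Rightarrow> real) \<Rightarrow> real" where
  "CL_S n d = (\<Sum>i<n. d i)"

definition CL_S2 :: "nat \<Rightarrow> (nat \<Rightarrow> real) \<Rightarrow> real" where
  "CL_S2 n d = (\<Sum>i<n. (d i)^2)"

definition CL_dmax :: "nat \<Rightarrow> (nat \<Rightarrow> real) \<Rightarrow> real" where
  "CL_dmax n d = Max (d ` {..<n})"

definition CL_p :: "nat \<Rightarrow> (nat \<Rightarrow> real) \<Rightarrow> nat \<Rightarrow> nat \<Rightarrow> real" where
  "CL_p n d i j = d i * d j / CL_S n d"

definition CL_pmax :: "nat \<Rightarrow> (nat \<Rightarrow> real) \<Rightarrow> real" where
  "CL_pmax n d = (CL_dmax n d)^2 / CL_S n d"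

text \<open>Edge slots: unordered pairs {i,j} (loops allowed), encoded as (i,j) with i \<le> j < n.\<close>
definition CL_slots :: "nat \<Rightarrow> (nat \<times> nat) set" where
  "CL_slots n = {(i,j). i \<le> j \<and> j < n}"

text \<open>The Chung--Lu random graph: independent Bernoulli indicator for each slot.
  A graph is a function from slots to bool (False outside the slots).\<close>
definition chung_lu :: "nat \<Rightarrow> (nat \<Rightarrow> real) \<Rightarrow> (nat \<times> nat \<Rightarrow> bool) pmf" where
  "chung_lu n d = Pi_pmf (CL_slots n) False (\<lambda>(i,j). bernoulli_pmf (CL_p n d i j))"

definition adj :: "(nat \<times> nat \<Rightarrow> bool) \<Rightarrow> nat \<Rightarrow> nat \<Rightarrow> bool" where
  "adj G i j = G (min i j, max i j)"

definition simple_paths :: "nat \<Rightarrow> (nat \<times> nat \<Rightarrow> bool) \<Rightarrow> nat \<Rightarrow> nat \<Rightarrow> nat \<Rightarrow> nat list set" where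
  "simple_paths n G r s t = {b. length b = r + 1 \<and> b ! 0 = s \<and> b ! r = t \<and> distinct b
      \<and> set b \<subseteq> {..<n} \<and> (\<forall>i<r. adj G (b ! i) (b ! (i+1)))}"

definition SP :: "nat \<Rightarrow> (nat \<times> nat \<Rightarrow> bool) \<Rightarrow> nat \<Rightarrow> nat \<Rightarrow> nat \<Rightarrow> nat" where
  "SP n G r s t = card (simple_paths n G r s t)"

end

theory Submission
  imports Defs
begin

text \<open>By linearity of expectation, E[SP_r(s,t)] sums, over the candidate paths s, b_1, ..., b_{r-1}, t,
  the probability that all r edges are present. The edges of a simple path are distinct slots, so
  by independence this is (d_s d_t / S^r) * d_{b_1}^2 ... d_{b_{r-1}}^2. Choosing the distinct inner
  vertices one at a time, each choice loses at most (number of excluded vertices) * d_max^2 of the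
  total weight S_2, and (1 - x)(1 - y) \<ge> 1 - x - y collects these losses into the factor
  1 - r(r+1)/2 * d_max^2 / S_2.\<close>

definition distinct_lists_avoiding :: "nat \<Rightarrow> nat \<Rightarrow> nat set \<Rightarrow> nat list set" where
  "distinct_lists_avoiding n k A = {xs. length xs = k \<and> distinct xs \<and> set xs \<subseteq> {..<n} - A}"

lemma finite_distinct_lists_avoiding: "finite (distinct_lists_avoiding n k A)"
proof -
  have "distinct_lists_avoiding n k A \<subseteq> {xs. set xs \<subseteq> {..<n} \<and> length xs = k}"
    by (auto simp: distinct_lists_avoiding_def)
  thus ?thesis using finite_lists_length_eq[of "{..<n}" k] finite_subset by blast
qed

lemma distinct_lists_avoiding_0: "distinct_lists_avoiding n 0 A = {[]}"
  by (auto simp: distinct_lists_avoiding_def)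

lemma distinct_lists_avoiding_Suc:
  "distinct_lists_avoiding n (Suc k) A
     = (\<lambda>(v, xs). v # xs) ` (SIGMA v:{..<n} - A. distinct_lists_avoiding n k (insert v A))"
proof
  show "distinct_lists_avoiding n (Suc k) A
      \<subseteq> (\<lambda>(v, xs). v # xs) ` (SIGMA v:{..<n} - A. distinct_lists_avoiding n k (insert v A))"
  proof
    fix ys assume "ys \<in> distinct_lists_avoiding n (Suc k) A"
    then obtain v xs where "ys = v # xs" "v \<in> {..<n} - A" "xs \<in> distinct_lists_avoiding n k (insert v A)"
      by (auto simp: distinct_lists_avoiding_def length_Suc_conv) blast
    then show "ys \<in> (\<lambda>(v, xs). v # xs) ` (SIGMA v:{..<n} - A. distinct_lists_avoiding n k (insert v A))"
      by force
  qed
qed (auto simp: distinct_lists_avoiding_def)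

lemma sum_distinct_lists_avoiding_Suc:
  "(\<Sum>ys\<in>distinct_lists_avoiding n (Suc k) A. f ys)
     = (\<Sum>v\<in>{..<n} - A. \<Sum>xs\<in>distinct_lists_avoiding n k (insert v A). f (v # xs))"
proof -
  have "inj_on (\<lambda>(v, xs). v # xs) (SIGMA v:{..<n} - A. distinct_lists_avoiding n k (insert v A))"
    by (auto simp: inj_on_def)
  then show ?thesis
    unfolding distinct_lists_avoiding_Suc
    by (simp add: sum.reindex sum.Sigma finite_distinct_lists_avoiding split_def)
qed

lemma one_minus_add_le_mult:
  fixes x y :: real
  assumes "0 \<le> x" "0 \<le> y"
  shows "1 - (x + y) \<le> (1 - x) * (1 - y)"
  using mult_nonneg_nonneg[OF assms] by (simp add: algebra_simps)

lemma sum_Diff_ge_card_mult: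
  fixes w :: "'a \<Rightarrow> real"
  assumes "finite I" "finite A" "\<And>v. v \<in> I \<Longrightarrow> w v \<le> D" "0 \<le> D"
  shows "sum w I - real (card A) * D \<le> sum w (I - A)"
proof -
  have "sum w (I \<inter> A) \<le> real (card (I \<inter> A)) * D"
    using sum_bounded_above[of "I \<inter> A" w D] assms(3) by auto
  also have "\<dots> \<le> real (card A) * D"
    using assms(2,4) card_mono[of A "I \<inter> A"] by (auto intro!: mult_right_mono)
  finally show ?thesis
    using sum.Int_Diff[OF assms(1), of w A] by simp
qed

text \<open>The constant k |A| + k(k-1)/2 counts the vertices excluded before each of the k choices.\<close>

lemma sum_prod_list_distinct_lists_avoiding_ge:
  fixes w :: "nat \<Rightarrow> real"
  assumes W: "W = (\<Sum>v<n. w v)" "W > 0"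
    and w: "\<And>v. v < n \<Longrightarrow> 0 \<le> w v" "\<And>v. v < n \<Longrightarrow> w v \<le> D"
    and "D \<ge> 0" and "finite A"
  shows "W ^ k * (1 - (real k * real (card A) + real k * (real k - 1) / 2) * D / W)
           \<le> (\<Sum>xs\<in>distinct_lists_avoiding n k A. prod_list (map w xs))"
  using \<open>finite A\<close>
proof (induction k arbitrary: A)
  case 0
  then show ?case by (simp add: distinct_lists_avoiding_0)
next
  case (Suc k)
  define a where "a = real (card A)"
  define c where "c = real k * (a + 1) + real k * (real k - 1) / 2"
  define X where "X = W ^ k * (1 - c * D / W)"
  define F where "F v = (\<Sum>xs\<in>distinct_lists_avoiding n k (insert v A). prod_list (map w xs))" for v
  have F_nonneg: "0 \<le> F v" for v
    unfolding F_def distinct_lists_avoiding_def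
    by (intro sum_nonneg prod_list_nonneg) (auto intro: w(1))
  have F_ge: "X \<le> F v" if "v \<notin> A" for v
    using Suc.IH[of "insert v A"] Suc.prems that by (simp add: F_def X_def c_def a_def add.commute)
  have sum_eq: "(\<Sum>xs\<in>distinct_lists_avoiding n (Suc k) A. prod_list (map w xs))
      = (\<Sum>v\<in>{..<n} - A. w v * F v)"
    by (simp add: sum_distinct_lists_avoiding_Suc F_def sum_distrib_left)
  have const_eq: "real (Suc k) * real (card A) + real (Suc k) * (real (Suc k) - 1) / 2 = a + c"
    by (simp add: c_def a_def field_simps)
  have aD: "0 \<le> a * D / W" using \<open>D \<ge> 0\<close> W(2) by (simp add: a_def)
  have cD: "0 \<le> c * D / W" using \<open>D \<ge> 0\<close> W(2) by (simp add: c_def a_def, cases k) auto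
  show ?case
  proof (cases "0 \<le> X")
    case True
    have "W - a * D \<le> (\<Sum>v\<in>{..<n} - A. w v)"
      unfolding W(1) a_def using sum_Diff_ge_card_mult[of "{..<n}" A w D] Suc.prems w(2) \<open>D \<ge> 0\<close> by simp
    then have "(W - a * D) * X \<le> (\<Sum>v\<in>{..<n} - A. w v) * X"
      using True by (rule mult_right_mono)
    also have "\<dots> \<le> (\<Sum>v\<in>{..<n} - A. w v * F v)"
      unfolding sum_distrib_right using F_ge w(1) by (intro sum_mono mult_left_mono) auto
    finally have lower: "(W - a * D) * X \<le> (\<Sum>v\<in>{..<n} - A. w v * F v)" .
    have "W ^ Suc k * (1 - (a + c) * D / W) \<le> W ^ Suc k * ((1 - a * D / W) * (1 - c * D / W))"
      using one_minus_add_le_mult[OF aD cD] W(2) by (simp add: add_divide_distrib distrib_right)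
    also have "\<dots> = (W - a * D) * X"
      using W(2) by (simp add: X_def field_simps)
    finally show ?thesis using lower sum_eq const_eq by simp
  next
    case False
    then have "1 - c * D / W < 0"
      using W(2) by (simp add: X_def zero_le_mult_iff)
    then have "1 - (a + c) * D / W < 0"
      using aD by (simp add: add_divide_distrib distrib_right)
    then have "W ^ Suc k * (1 - (a + c) * D / W) \<le> 0"
      using W(2) by (intro mult_nonneg_nonpos) auto
    also have "0 \<le> (\<Sum>v\<in>{..<n} - A. w v * F v)"
      using F_nonneg w(1) by (intro sum_nonneg) auto
    finally show ?thesis using sum_eq const_eq by simp
  qed
qed

lemma expectation_card_filter:
  fixes M :: "'a pmf" and Q :: "'a \<Rightarrow> 'b \<Rightarrow> bool"
  assumes "finite P"
  shows "measure_pmf.expectation M (\<lambda>G. real (card {b\<in>P. Q G b}))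
           = (\<Sum>b\<in>P. measure_pmf.prob M {G. Q G b})"
proof -
  have card_eq: "real (card {b\<in>P. Q G b}) = (\<Sum>b\<in>P. indicator {G. Q G b} G)" for G
  proof -
    have "(\<Sum>b\<in>P. indicator {G. Q G b} G) = (\<Sum>b\<in>P. of_bool (Q G b) :: real)"
      by (simp add: indicator_def)
    also have "\<dots> = real (card (P \<inter> {b. Q G b}))"
      using assms by (simp only: sum_of_bool_eq)
    finally show ?thesis by (simp add: Collect_conj_eq Int_commute)
  qed
  have "integrable (measure_pmf M) (indicator {G. Q G b} :: 'a \<Rightarrow> real)" for b
    by (rule measure_pmf.integrable_const_bound[where B = 1]) (auto simp: indicator_def)
  then show ?thesis
    unfolding card_eq by (simp add: Bochner_Integration.integral_sum integral_indicator)
qed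

lemma CL_p_nonneg_le_1:
  assumes d: "\<And>i. i < n \<Longrightarrow> 0 \<le> d i" "\<And>i. i < n \<Longrightarrow> (d i)^2 \<le> CL_S n d"
    and "i < n" "j < n"
  shows "0 \<le> CL_p n d i j \<and> CL_p n d i j \<le> 1"
proof -
  have "d i * d j \<le> ((d i)^2 + (d j)^2) / 2"
    using sum_squares_ge_zero[of "d i - d j" 0] by (simp add: power2_eq_square algebra_simps)
  also have "\<dots> \<le> CL_S n d" using d(2)[OF \<open>i < n\<close>] d(2)[OF \<open>j < n\<close>] by simp
  finally have "d i * d j \<le> CL_S n d" .
  moreover have "0 \<le> d i * d j" using d(1) assms(3,4) by simp
  ultimately show ?thesis
    unfolding CL_p_def by (cases "CL_S n d = 0") (auto simp: divide_le_eq_1)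
qed

lemma CL_p_commute: "CL_p n d i j = CL_p n d j i"
  by (simp add: CL_p_def mult.commute)

lemma inj_on_path_slots:
  assumes "distinct b" "length b = r + 1"
  shows "inj_on (\<lambda>i. (min (b!i) (b!(i+1)), max (b!i) (b!(i+1)))) {..<r}"
proof (rule inj_onI)
  fix i j assume "i \<in> {..<r}" "j \<in> {..<r}"
    and same_slot: "(min (b!i) (b!(i+1)), max (b!i) (b!(i+1))) = (min (b!j) (b!(j+1)), max (b!j) (b!(j+1)))"
  have index_inj: "x = y" if "x < r + 1" "y < r + 1" "b!x = b!y" for x y
    using assms that nth_eq_iff_index_eq[of b] by simp
  have "b!i = b!j \<and> b!(i+1) = b!(j+1) \<or> b!i = b!(j+1) \<and> b!(i+1) = b!j"
    using same_slot by (auto simp: min_def max_def split: if_splits)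
  then show "i = j"
  proof (elim disjE conjE)
    assume "b!i = b!j"
    then show "i = j" using index_inj \<open>i \<in> {..<r}\<close> \<open>j \<in> {..<r}\<close> by simp
  next
    assume "b!i = b!(j+1)" "b!(i+1) = b!j"
    then have "i = j + 1" "i + 1 = j"
      using index_inj \<open>i \<in> {..<r}\<close> \<open>j \<in> {..<r}\<close> by simp_all
    then show "i = j" by simp
  qed
qed

lemma prob_chung_lu_path:
  assumes p01: "\<And>i j. i < n \<Longrightarrow> j < n \<Longrightarrow> 0 \<le> CL_p n d i j \<and> CL_p n d i j \<le> 1"
    and b: "distinct b" "length b = r + 1" "set b \<subseteq> {..<n}"
  shows "measure_pmf.prob (chung_lu n d) {G. \<forall>i<r. adj G (b!i) (b!(i+1))}
           = (\<Prod>i<r. CL_p n d (b!i) (b!(i+1)))"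
proof -
  define slot where "slot i = (min (b!i) (b!(i+1)), max (b!i) (b!(i+1)))" for i
  define E where "E = slot ` {..<r}"
  define edge where "edge = (\<lambda>(i, j). bernoulli_pmf (CL_p n d i j))"
  define B where "B e = (if e \<in> E then {True} else UNIV)" for e
  have "b!i < n" if "i \<le> r" for i
  proof -
    have "b!i \<in> set b" using b(2) that by (intro nth_mem) simp
    then show ?thesis using b(3) by auto
  qed
  then have E_slots: "E \<subseteq> CL_slots n"
    by (auto simp: E_def slot_def CL_slots_def min_def max_def)
  have finite_slots: "finite (CL_slots n)"
    by (rule finite_subset[of _ "{..<n} \<times> {..<n}"]) (auto simp: CL_slots_def)
  have "{G. \<forall>i<r. adj G (b!i) (b!(i+1))} = Pi (CL_slots n) B"
    using E_slots unfolding adj_def B_def E_def slot_def Pi_def by auto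
  then have "measure_pmf.prob (chung_lu n d) {G. \<forall>i<r. adj G (b!i) (b!(i+1))}
      = (\<Prod>e\<in>CL_slots n. measure_pmf.prob (edge e) (B e))"
    unfolding chung_lu_def edge_def by (simp add: measure_Pi_pmf_Pi[OF finite_slots])
  also have "\<dots> = (\<Prod>e\<in>E. measure_pmf.prob (edge e) (B e))"
    by (rule prod.mono_neutral_right[OF finite_slots E_slots]) (auto simp: B_def)
  also have "\<dots> = (\<Prod>e\<in>E. case_prod (CL_p n d) e)"
  proof (rule prod.cong[OF refl])
    fix e assume "e \<in> E"
    moreover obtain i j where "e = (i, j)" by force
    moreover have "i < n" "j < n" using \<open>e \<in> E\<close> E_slots \<open>e = (i, j)\<close> by (auto simp: CL_slots_def)
    ultimately show "measure_pmf.prob (edge e) (B e) = case_prod (CL_p n d) e"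
      using p01[of i j] by (simp add: edge_def B_def measure_pmf_single)
  qed
  also have "\<dots> = (\<Prod>i<r. case_prod (CL_p n d) (slot i))"
    using inj_on_path_slots[OF b(1,2)] unfolding E_def slot_def by (simp add: prod.reindex)
  also have "\<dots> = (\<Prod>i<r. CL_p n d (b!i) (b!(i+1)))"
    by (rule prod.cong[OF refl]) (auto simp: slot_def min_def max_def CL_p_commute)
  finally show ?thesis .
qed

lemma prod_CL_p_path:
  assumes "CL_S n d \<noteq> 0"
  shows "(\<Prod>i<Suc (length xs). CL_p n d ((u # xs @ [t])!i) ((u # xs @ [t])!(i+1)))
           = d u * d t / CL_S n d ^ Suc (length xs) * prod_list (map (\<lambda>x. (d x)^2) xs)"
proof (induction xs arbitrary: u)
  case Nil
  then show ?case by (simp add: CL_p_def)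
next
  case (Cons x xs)
  have "(\<Prod>i<Suc (length (x # xs)). CL_p n d ((u # (x # xs) @ [t])!i) ((u # (x # xs) @ [t])!(i+1)))
      = CL_p n d u x * (\<Prod>i<Suc (length xs). CL_p n d ((x # xs @ [t])!i) ((x # xs @ [t])!(i+1)))"
    by (subst prod.lessThan_Suc_shift) simp
  also have "\<dots> = CL_p n d u x * (d x * d t / CL_S n d ^ Suc (length xs) * prod_list (map (\<lambda>x. (d x)^2) xs))"
    by (simp only: Cons.IH)
  also have "\<dots> = d u * d t / CL_S n d ^ Suc (length (x # xs)) * prod_list (map (\<lambda>x. (d x)^2) (x # xs))"
    using assms by (simp add: CL_p_def field_simps power2_eq_square)
  finally show ?case .
qed

lemma candidate_paths_eq_image:
  assumes "s \<noteq> t" "s < n" "t < n"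
  shows "{b. length b = Suc k + 1 \<and> b!0 = s \<and> b!Suc k = t \<and> distinct b \<and> set b \<subseteq> {..<n}}
           = (\<lambda>xs. s # xs @ [t]) ` distinct_lists_avoiding n k {s, t}"
proof
  show "(\<lambda>xs. s # xs @ [t]) ` distinct_lists_avoiding n k {s, t}
      \<subseteq> {b. length b = Suc k + 1 \<and> b!0 = s \<and> b!Suc k = t \<and> distinct b \<and> set b \<subseteq> {..<n}}"
    using assms by (auto simp: distinct_lists_avoiding_def nth_append)
next
  show "{b. length b = Suc k + 1 \<and> b!0 = s \<and> b!Suc k = t \<and> distinct b \<and> set b \<subseteq> {..<n}}
      \<subseteq> (\<lambda>xs. s # xs @ [t]) ` distinct_lists_avoiding n k {s, t}"
  proof
    fix b assume "b \<in> {b. length b = Suc k + 1 \<and> b!0 = s \<and> b!Suc k = t \<and> distinct b \<and> set b \<subseteq> {..<n}}"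
    then have b: "length b = Suc k + 1" "b!0 = s" "b!Suc k = t" "distinct b" "set b \<subseteq> {..<n}"
      by simp_all
    then obtain ys where "b = s # ys" "length ys = Suc k" "ys!k = t"
      by (cases b) auto
    then have "b = s # butlast ys @ [t]"
      using append_butlast_last_id[of ys] last_conv_nth[of ys] by force
    with b show "b \<in> (\<lambda>xs. s # xs @ [t]) ` distinct_lists_avoiding n k {s, t}"
      by (auto simp: distinct_lists_avoiding_def intro!: image_eqI[where x = "butlast ys"])
  qed
qed

lemma expectation_SP_chung_lu:
  assumes d: "\<And>i. i < n \<Longrightarrow> 0 \<le> d i" "\<And>i. i < n \<Longrightarrow> (d i)^2 \<le> CL_S n d"
    and "CL_S n d \<noteq> 0" and st: "s \<noteq> t" "s < n" "t < n"
  shows "measure_pmf.expectation (chung_lu n d) (\<lambda>G. real (SP n G (Suc k) s t))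
           = d s * d t / CL_S n d ^ Suc k
             * (\<Sum>xs\<in>distinct_lists_avoiding n k {s, t}. prod_list (map (\<lambda>x. (d x)^2) xs))"
proof -
  define P where "P = {b. length b = Suc k + 1 \<and> b!0 = s \<and> b!Suc k = t \<and> distinct b \<and> set b \<subseteq> {..<n}}"
  have P_eq: "P = (\<lambda>xs. s # xs @ [t]) ` distinct_lists_avoiding n k {s, t}"
    unfolding P_def using candidate_paths_eq_image[OF st] .
  have "inj_on (\<lambda>xs. s # xs @ [t]) (distinct_lists_avoiding n k {s, t})"
    by (auto simp: inj_on_def)
  note reindex = sum.reindex[OF this, unfolded comp_def]
  have "simple_paths n G (Suc k) s t = {b\<in>P. \<forall>i<Suc k. adj G (b!i) (b!(i+1))}" for G
    by (auto simp: simple_paths_def P_def)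
  then have "measure_pmf.expectation (chung_lu n d) (\<lambda>G. real (SP n G (Suc k) s t))
      = (\<Sum>b\<in>P. measure_pmf.prob (chung_lu n d) {G. \<forall>i<Suc k. adj G (b!i) (b!(i+1))})"
    unfolding SP_def using P_eq finite_distinct_lists_avoiding by (simp add: expectation_card_filter)
  also have "\<dots> = (\<Sum>b\<in>P. \<Prod>i<Suc k. CL_p n d (b!i) (b!(i+1)))"
    using CL_p_nonneg_le_1[OF d] by (intro sum.cong refl prob_chung_lu_path) (auto simp: P_def)
  also have "\<dots> = (\<Sum>xs\<in>distinct_lists_avoiding n k {s, t}.
      d s * d t / CL_S n d ^ Suc k * prod_list (map (\<lambda>x. (d x)^2) xs))"
    unfolding P_eq reindex using prod_CL_p_path[OF \<open>CL_S n d \<noteq> 0\<close>]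
    by (intro sum.cong refl) (auto simp: distinct_lists_avoiding_def)
  finally show ?thesis by (simp add: sum_distrib_left)
qed

theorem lemma2:
  fixes n :: nat and d :: "nat \<Rightarrow> real" and r s t :: nat
  assumes "n \<ge> 1"
    and "\<And>i. i < n \<Longrightarrow> d i > 0"
    and "\<And>i. i < n \<Longrightarrow> (d i)^2 \<le> CL_S n d"
    and "s < n" and "t < n" and "s \<noteq> t" and "r \<ge> 1"
  shows "measure_pmf.expectation (chung_lu n d) (\<lambda>G. real (SP n G r s t))
     \<ge> CL_p n d s t * (CL_S2 n d / CL_S n d) ^ (r - 1)
         * (1 - real (r * (r + 1)) * CL_pmax n d / 2 * (CL_S n d / CL_S2 n d))"
proof -
  obtain k where r: "r = Suc k" using \<open>r \<ge> 1\<close> by (cases r) auto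
  define S where "S = CL_S n d"
  define S2 where "S2 = CL_S2 n d"
  define D where "D = (CL_dmax n d)^2"
  define q where "q = d s * d t / S ^ r"
  have "0 < n" using \<open>n \<ge> 1\<close> by simp
  then have "S > 0" "S2 > 0"
    unfolding S_def S2_def CL_S_def CL_S2_def using assms(2) by (auto intro!: sum_pos) (metis less_irrefl)
  have d_le_D: "(d v)^2 \<le> D" if "v < n" for v
    unfolding D_def CL_dmax_def using that assms(2)[OF that]
    by (intro power_mono Max_ge) auto
  have "q \<ge> 0" unfolding q_def using assms(2)[OF \<open>s < n\<close>] assms(2)[OF \<open>t < n\<close>] \<open>S > 0\<close> by simp
  have "CL_p n d s t * (CL_S2 n d / CL_S n d) ^ (r - 1)
         * (1 - real (r * (r + 1)) * CL_pmax n d / 2 * (CL_S n d / CL_S2 n d))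
      = q * (S2 ^ k * (1 - real (r * (r + 1)) / 2 * D / S2))"
    using \<open>S > 0\<close> \<open>S2 > 0\<close>
    by (simp add: q_def r CL_p_def CL_pmax_def S_def[symmetric] S2_def[symmetric] D_def[symmetric]
        field_simps)
  also have "\<dots> \<le> q * (S2 ^ k * (1 - (real k * 2 + real k * (real k - 1) / 2) * D / S2))"
    using \<open>q \<ge> 0\<close> \<open>S2 > 0\<close> by (intro mult_left_mono) (auto simp: r D_def field_simps)
  also have "\<dots> \<le> q * (\<Sum>xs\<in>distinct_lists_avoiding n k {s, t}. prod_list (map (\<lambda>x. (d x)^2) xs))"
    using sum_prod_list_distinct_lists_avoiding_ge[where W = S2 and w = "\<lambda>x. (d x)^2" and A = "{s, t}"]
      d_le_D \<open>S2 > 0\<close> \<open>q \<ge> 0\<close> \<open>s \<noteq> t\<close>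
    by (intro mult_left_mono) (auto simp: S2_def CL_S2_def D_def)
  also have "\<dots> = measure_pmf.expectation (chung_lu n d) (\<lambda>G. real (SP n G r s t))"
    using expectation_SP_chung_lu[of n d s t k] assms \<open>S > 0\<close>
    by (simp add: r q_def S_def less_imp_le)
  finally show ?thesis .
qed

end
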